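(* Let $Q=(q_n)_{n\ge1}$ be a basic sequence that is infinite in limit, and suppose there exist constants $M$ and $t$ such that $l_j\le M$ for all $j>t$. Then for every $Q$-special sequence $F$ and every real $\psi>1$, $$D_n^*(y_F)<\psi\cdot\sqrt{2M}\cdot(2M+1)\cdot n^{-1/2}$$ for all sufficiently large $n$.
   Context: A basic sequence is a sequence $Q=(q_n)_{n\ge1}$ of integers with $q_n\ge 2$; it is infinite in limit if $q_n\to\infty$. $\mathbb{N}$ denotes the positive integers. For each positive integer $j$ let $\nu_j=\min\{N : q_m\ge 2j^2 \text{ for all } m\ge N\}$. Define $l_1=\max(\nu_2-1,1)$ and, recursively for $i\ge 2$, $l_i=\max\big(\min\{k\in\mathbb{N} : l_1+2l_2+\cdots+(i-1)l_{i-1}+ik\ge \nu_{i+1}-1\},1\big)$. Put $L_i=\sum_{j=1}^i jl_j$ (with $L_0=0$). Let $S_Q=\{(a,b,c)\in\mathbb{N}^3 : b\le l_a,\ c\le a\}$ and $\phi_Q(a,b,c)=L_{a-1}+(b-1)a+c$; $\phi_Q$ is a bijection $S_Q\to\mathbb{N}$. A $Q$-special sequence is a family of integers $F=(F_{(a,b,c)})_{(a,b,c)\in S_Q}$ with $F_{(a,b,1)}=0$ for all $(a,b,1)\in S_Q$ and $\frac{F_{(a,b,c)}}{q_{\phi_Q(a,b,c)}}\in\left[\frac{c-1}{a}-\frac{1}{2a^2},\frac{c-1}{a}+\frac{1}{2a^2}\right]$ for $(a,b,c)\in S_Q$ with $c>1$. For such $F$ put $E_{F,n}=F_{\phi_Q^{-1}(n)}$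 and let $y_F$ be the sequence $\left(E_{F,n}/q_n\right)_{n=1}^\infty$. For a sequence $w=(w_1,w_2,\dots)$ in $[0,1)$, the star discrepancy is $D_n^*(w)=\sup_{0<\gamma\le1}\left|\frac{\#\{1\le k\le n: w_k\in[0,\gamma)\}}{n}-\gamma\right|$. *)

theory Defs
  imports "HOL-Analysis.Analysis"
begin

text \<open>Sequences are indexed from 1; the value at index 0 is irrelevant.\<close>

definition basic_seq :: "(nat \<Rightarrow> int) \<Rightarrow> bool" where
  "basic_seq q \<longleftrightarrow> (\<forall>n\<ge>1. q n \<ge> 2)"

definition infinite_in_limit :: "(nat \<Rightarrow> int) \<Rightarrow> bool" where
  "infinite_in_limit q \<longleftrightarrow> filterlim q at_top sequentially"

definition nu :: "(nat \<Rightarrow> int) \<Rightarrow> nat \<Rightarrow> nat" where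
  "nu q j = (LEAST N. N \<ge> 1 \<and> (\<forall>m\<ge>N. q m \<ge> 2 * int j ^ 2))"

text \<open>l_step q i Lprev computes l_i from L_{i-1} = Lprev.\<close>
definition l_step :: "(nat \<Rightarrow> int) \<Rightarrow> nat \<Rightarrow> nat \<Rightarrow> nat" where
  "l_step q i Lprev =
     (if i = 1 then max (nu q 2 - 1) 1
      else max (LEAST k. k \<ge> 1 \<and> Lprev + i * k \<ge> nu q (i + 1) - 1) 1)"

primrec LL :: "(nat \<Rightarrow> int) \<Rightarrow> nat \<Rightarrow> nat" where
  "LL q 0 = 0"
| "LL q (Suc i) = LL q i + Suc i * l_step q (Suc i) (LL q i)"

definition ll :: "(nat \<Rightarrow> int) \<Rightarrow> nat \<Rightarrow> nat" where
  "ll q i = l_step q i (LL q (i - 1))"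

definition SQ :: "(nat \<Rightarrow> int) \<Rightarrow> (nat \<times> nat \<times> nat) set" where
  "SQ q = {(a, b, c). a \<ge> 1 \<and> b \<ge> 1 \<and> c \<ge> 1 \<and> b \<le> ll q a \<and> c \<le> a}"

definition phiQ :: "(nat \<Rightarrow> int) \<Rightarrow> nat \<times> nat \<times> nat \<Rightarrow> nat" where
  "phiQ q = (\<lambda>(a, b, c). LL q (a - 1) + (b - 1) * a + c)"

definition Q_special :: "(nat \<Rightarrow> int) \<Rightarrow> (nat \<times> nat \<times> nat \<Rightarrow> int) \<Rightarrow> bool" where
  "Q_special q F \<longleftrightarrow>
     (\<forall>(a, b, c) \<in> SQ q. c = 1 \<longrightarrow> F (a, b, c) = 0) \<and>
     (\<forall>(a, b, c) \<in> SQ q. c > 1 \<longrightarrow>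
        real_of_int (F (a, b, c)) / real_of_int (q (phiQ q (a, b, c)))
          \<in> {(real c - 1) / real a - 1 / (2 * real a ^ 2) ..
             (real c - 1) / real a + 1 / (2 * real a ^ 2)})"

definition E_F :: "(nat \<Rightarrow> int) \<Rightarrow> (nat \<times> nat \<times> nat \<Rightarrow> int) \<Rightarrow> nat \<Rightarrow> int" where
  "E_F q F n = F (inv_into (SQ q) (phiQ q) n)"

definition y_F :: "(nat \<Rightarrow> int) \<Rightarrow> (nat \<times> nat \<times> nat \<Rightarrow> int) \<Rightarrow> nat \<Rightarrow> real" where
  "y_F q F n = real_of_int (E_F q F n) / real_of_int (q n)"

definition star_discrepancy :: "nat \<Rightarrow> (nat \<Rightarrow> real) \<Rightarrow> real" where
  "star_discrepancy n w =
     (SUP \<gamma> \<in> {0<..1}. \<bar>real (card {k \<in> {1..n}. w k \<in> {0..<\<gamma>}}) / real n - \<gamma>\<bar>)"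

end

theory Submission
  imports Defs "HOL-Real_Asymp.Real_Asymp"
begin

(* The sequence y_F is a concatenation of blocks: at level a there are ll q a blocks of length a,
   and the c-th entry of each block lies within 1/(2a^2) of (c - 1)/a, the first one being 0.
   Such an almost equidistant block hits [0, gamma) a*gamma + O(1) times, with an error of at
   most 2. The first n terms consist of all blocks of the levels below some a, at most ll q a
   blocks of level a and a partial block of length < a. Since n > LL q (a - 1) >= a(a - 1)/2,
   we have a < sqrt (2n) + 1, and ll q j <= M for j > t bounds the number of level-a blocks,
   so the counting error is O(1) + (2M + 1) sqrt (2n). *)

lemma ll_ge_1: "1 \<le> ll q i"
  by (simp add: ll_def l_step_def)

lemma tail_bound_ll_ge_1: "\<forall>j>t. real (ll q j) \<le> M \<Longrightarrow> 1 \<le> M"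
  using ll_ge_1[of q "Suc t"] by force

lemma LL_Suc_ll: "LL q (Suc i) = LL q i + Suc i * ll q (Suc i)"
  by (simp add: ll_def)

lemma LL_mono: "i \<le> j \<Longrightarrow> LL q i \<le> LL q j"
  by (rule lift_Suc_mono_le[of "LL q"]) auto

lemma LL_lower_bound: "i * (i + 1) \<le> 2 * LL q i"
proof (induction i)
  case (Suc i)
  have "Suc i \<le> Suc i * ll q (Suc i)"
    using ll_ge_1[of q "Suc i"] by (metis mult_1_right mult_le_mono2)
  then have "LL q i + Suc i \<le> LL q (Suc i)"
    using LL_Suc_ll[of q i] by linarith
  with Suc.IH show ?case
    by (simp del: LL.simps)
qed simp

lemma phiQ_bounds:
  assumes "(a, b, c) \<in> SQ q"
  shows "LL q (a - 1) < phiQ q (a, b, c) \<and> phiQ q (a, b, c) \<le> LL q a"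
proof -
  from assms have a: "1 \<le> a" "1 \<le> b" "1 \<le> c" "b \<le> ll q a" "c \<le> a"
    by (auto simp: SQ_def)
  have "(b - 1) * a + c \<le> b * a"
    using a by (cases b) auto
  also have "\<dots> \<le> a * ll q a"
    using a by simp
  finally show ?thesis
    using a LL_Suc_ll[of q "a - 1"] by (simp add: phiQ_def)
qed

lemma inj_on_phiQ: "inj_on (phiQ q) (SQ q)"
proof (rule inj_onI, clarify)
  fix a b c a' b' c'
  assume x: "(a, b, c) \<in> SQ q" and x': "(a', b', c') \<in> SQ q"
    and eq: "phiQ q (a, b, c) = phiQ q (a', b', c')"
  have "a = a'"
  proof (rule ccontr)
    assume "a \<noteq> a'"
    then have "LL q a \<le> LL q (a' - 1) \<or> LL q a' \<le> LL q (a - 1)"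
      by (cases "a < a'") (auto intro!: LL_mono)
    then show False
      using phiQ_bounds[OF x] phiQ_bounds[OF x'] eq by linarith
  qed
  with x x' have c: "1 \<le> c" "c \<le> a" "1 \<le> c'" "c' \<le> a" and b: "1 \<le> b" "1 \<le> b'"
    by (auto simp: SQ_def)
  have e: "(b - 1) * a + (c - 1) = (b' - 1) * a + (c' - 1)"
    using eq \<open>a = a'\<close> c by (simp add: phiQ_def)
  have div_mod: "(k * a + d) div a = k \<and> (k * a + d) mod a = d" if "d < a" for k d
    using that by simp
  have "b - 1 = b' - 1 \<and> c - 1 = c' - 1"
    using div_mod[of "c - 1" "b - 1"] div_mod[of "c' - 1" "b' - 1"] e c by force
  then show "a = a' \<and> (b, c) = (b', c')"
    using \<open>a = a'\<close> b c by (simp, arith)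
qed

lemma y_F_phiQ:
  "x \<in> SQ q \<Longrightarrow> y_F q F (phiQ q x) = real_of_int (F x) / real_of_int (q (phiQ q x))"
  by (simp add: y_F_def E_F_def inv_into_f_f[OF inj_on_phiQ])

lemma card_grid_below: "card {c \<in> {1..a}. real c - 1 < x} = min a (nat \<lceil>x\<rceil>)"
proof -
  have "real c - 1 < x \<longleftrightarrow> c \<le> nat \<lceil>x\<rceil>" if "1 \<le> c" for c
  proof -
    have "c \<le> nat \<lceil>x\<rceil> \<longleftrightarrow> \<not> nat \<lceil>x\<rceil> \<le> c - 1"
      using that by arith
    then show ?thesis
      using that by (simp add: not_le of_nat_diff)
  qed
  then have "{c \<in> {1..a}. real c - 1 < x} = {1..min a (nat \<lceil>x\<rceil>)}"
    by auto
  then show ?thesis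
    by simp
qed

lemma card_grid_below_ge: "x \<le> real a \<Longrightarrow> x \<le> real (card {c \<in> {1..a}. real c - 1 < x})"
  unfolding card_grid_below by (auto simp: min_def intro: order.trans[OF le_of_int_ceiling])

lemma card_grid_below_le:
  assumes "0 \<le> x"
  shows "real (card {c \<in> {1..a}. real c - 1 < x}) \<le> x + 1"
proof -
  have "real (min a (nat \<lceil>x\<rceil>)) \<le> of_int \<lceil>x\<rceil>"
    using assms by linarith
  also have "\<dots> \<le> x + 1"
    using ceiling_correct[of x] by linarith
  finally show ?thesis
    unfolding card_grid_below .
qed

lemma almost_grid_hits:
  fixes y :: "nat \<Rightarrow> real"
  assumes a: "1 \<le> a" and \<gamma>: "0 < \<gamma>" "\<gamma> \<le> 1" and y_1: "y 1 = 0"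
    and close: "\<And>c. 1 < c \<Longrightarrow> c \<le> a \<Longrightarrow> \<bar>y c - (real c - 1) / real a\<bar> \<le> 1 / (2 * real a ^ 2)"
  shows "\<bar>real (card {c \<in> {1..a}. y c \<in> {0..<\<gamma>}}) - real a * \<gamma>\<bar> \<le> 2"
proof -
  define \<delta> where "\<delta> = 1 / (2 * real a)"
  \<comment> \<open>the hits are sandwiched between the grid points c - 1 below a * \<gamma> - \<delta> and below a * \<gamma> + \<delta>\<close>
  have \<delta>: "0 < \<delta>" "\<delta> \<le> 1 / 2"
    using a by (auto simp: \<delta>_def)
  have close': "\<bar>real a * y c - (real c - 1)\<bar> \<le> \<delta>" if "1 < c" "c \<le> a" for c
  proof -
    have "real a * y c - (real c - 1) = real a * (y c - (real c - 1) / real a)"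
      using a by (simp add: field_simps)
    then have "\<bar>real a * y c - (real c - 1)\<bar> = real a * \<bar>y c - (real c - 1) / real a\<bar>"
      by (simp add: abs_mult)
    also have "\<dots> \<le> real a * (1 / (2 * real a ^ 2))"
      using close[OF that] by (intro mult_left_mono) auto
    finally show ?thesis
      using a by (simp add: \<delta>_def power2_eq_square)
  qed
  let ?H = "{c \<in> {1..a}. y c \<in> {0..<\<gamma>}}"
  have "{c \<in> {1..a}. real c - 1 < real a * \<gamma> - \<delta>} \<subseteq> ?H"
  proof clarify
    fix c assume c: "c \<in> {1..a}" "real c - 1 < real a * \<gamma> - \<delta>"
    show "y c \<in> {0..<\<gamma>}"
    proof (cases "c = 1")
      case False
      then have "\<bar>real a * y c - (real c - 1)\<bar> \<le> \<delta>" "1 \<le> real c - 1"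
        using c close' by auto
      then have "0 \<le> real a * y c" "real a * y c < real a * \<gamma>"
        using c \<delta> by linarith+
      then show ?thesis
        using a by (simp add: zero_le_mult_iff)
    qed (use y_1 \<gamma> in simp)
  qed
  then have "card {c \<in> {1..a}. real c - 1 < real a * \<gamma> - \<delta>} \<le> card ?H"
    by (intro card_mono) auto
  moreover have "real a * \<gamma> - \<delta> \<le> real (card {c \<in> {1..a}. real c - 1 < real a * \<gamma> - \<delta>})"
    using mult_left_le[of \<gamma> "real a"] \<gamma> \<delta> by (intro card_grid_below_ge) simp
  ultimately have lower: "real a * \<gamma> - \<delta> \<le> real (card ?H)"
    by linarith
  have "?H \<subseteq> {c \<in> {1..a}. real c - 1 < real a * \<gamma> + \<delta>}"
  proof clarify
    fix c assume c: "c \<in> {1..a}" "y c \<in> {0..<\<gamma>}"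
    show "real c - 1 < real a * \<gamma> + \<delta>"
    proof (cases "c = 1")
      case False
      then have "\<bar>real a * y c - (real c - 1)\<bar> \<le> \<delta>" "real a * y c < real a * \<gamma>"
        using c close' a by auto
      then show ?thesis
        by linarith
    qed (use \<gamma> \<delta> in \<open>simp add: add_nonneg_pos\<close>)
  qed
  then have "card ?H \<le> card {c \<in> {1..a}. real c - 1 < real a * \<gamma> + \<delta>}"
    by (intro card_mono) auto
  moreover have "real (card {c \<in> {1..a}. real c - 1 < real a * \<gamma> + \<delta>}) \<le> real a * \<gamma> + \<delta> + 1"
    using \<gamma> \<delta> by (intro card_grid_below_le) simp
  ultimately have upper: "real (card ?H) \<le> real a * \<gamma> + \<delta> + 1"
    by linarith
  show ?thesis
    using lower upper \<delta> by linarith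
qed

definition count_deviation :: "(nat \<Rightarrow> real) \<Rightarrow> real \<Rightarrow> nat \<Rightarrow> real" where
  "count_deviation w \<gamma> n = real (card {k \<in> {1..n}. w k \<in> {0..<\<gamma>}}) - real n * \<gamma>"

lemma count_deviation_eq_sum:
  "count_deviation w \<gamma> n = (\<Sum>k=1..n. of_bool (w k \<in> {0..<\<gamma>}) - \<gamma>)"
  by (simp add: count_deviation_def sum_subtractf Int_def)

lemma count_deviation_add:
  "count_deviation w \<gamma> (s + m) = count_deviation w \<gamma> s + count_deviation (\<lambda>c. w (s + c)) \<gamma> m"
  by (induction m) (simp_all add: count_deviation_eq_sum)

lemma abs_count_deviation_le:
  assumes "0 \<le> \<gamma>" "\<gamma> \<le> 1"
  shows "\<bar>count_deviation w \<gamma> m\<bar> \<le> real m"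
proof -
  have "card {k \<in> {1..m}. w k \<in> {0..<\<gamma>}} \<le> card {1..m}"
    by (rule card_mono) auto
  then have "real (card {k \<in> {1..m}. w k \<in> {0..<\<gamma>}}) \<le> real m"
    by simp
  moreover have "0 \<le> real m * \<gamma>" "real m * \<gamma> \<le> real m"
    using assms by (simp_all add: mult_left_le)
  ultimately show ?thesis
    unfolding count_deviation_def by linarith
qed

lemma abs_count_deviation_blocks:
  assumes "\<And>i. i < b \<Longrightarrow> \<bar>count_deviation (\<lambda>c. w (s + i * a + c)) \<gamma> a\<bar> \<le> B"
  shows "\<bar>count_deviation w \<gamma> (s + b * a) - count_deviation w \<gamma> s\<bar> \<le> real b * B"
  using assms
proof (induction b)
  case (Suc b)
  have "s + Suc b * a = s + b * a + a"
    by simp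
  then have "count_deviation w \<gamma> (s + Suc b * a) =
      count_deviation w \<gamma> (s + b * a) + count_deviation (\<lambda>c. w (s + b * a + c)) \<gamma> a"
    by (simp only: count_deviation_add)
  moreover have "\<bar>count_deviation (\<lambda>c. w (s + b * a + c)) \<gamma> a\<bar> \<le> B"
    using Suc.prems[of b] by simp
  moreover have "\<bar>count_deviation w \<gamma> (s + b * a) - count_deviation w \<gamma> s\<bar> \<le> real b * B"
    using Suc by simp
  ultimately show ?case
    by (simp add: abs_le_iff algebra_simps)
qed simp

lemma star_discrepancy_le:
  assumes "1 \<le> n" and "\<And>\<gamma>. 0 < \<gamma> \<Longrightarrow> \<gamma> \<le> 1 \<Longrightarrow> \<bar>count_deviation w \<gamma> n\<bar> \<le> B"
  shows "star_discrepancy n w \<le> B / real n"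
  unfolding star_discrepancy_def
proof (rule cSUP_least)
  fix \<gamma> :: real assume "\<gamma> \<in> {0<..1}"
  then have "\<bar>count_deviation w \<gamma> n\<bar> / real n \<le> B / real n"
    using assms by (intro divide_right_mono) auto
  moreover have "real (card {k \<in> {1..n}. w k \<in> {0..<\<gamma>}}) / real n - \<gamma> = count_deviation w \<gamma> n / real n"
    using assms(1) by (simp add: count_deviation_def field_simps)
  ultimately show "\<bar>real (card {k \<in> {1..n}. w k \<in> {0..<\<gamma>}}) / real n - \<gamma>\<bar> \<le> B / real n"
    by simp
qed simp

(* Block b, counted from 0, of level a consists of the positions phiQ q (a, Suc b, c), 1 <= c <= a. *)
lemma abs_count_deviation_y_F_block:
  assumes QS: "Q_special q F" and \<gamma>: "0 < \<gamma>" "\<gamma> \<le> 1" and a: "1 \<le> a" and b: "b < ll q a"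
  shows "\<bar>count_deviation (\<lambda>c. y_F q F (LL q (a - 1) + b * a + c)) \<gamma> a\<bar> \<le> 2"
proof -
  have SQ: "(a, Suc b, c) \<in> SQ q" if "1 \<le> c" "c \<le> a" for c
    using that a b by (simp add: SQ_def)
  have y: "y_F q F (LL q (a - 1) + b * a + c) =
      real_of_int (F (a, Suc b, c)) / real_of_int (q (phiQ q (a, Suc b, c)))" if "1 \<le> c" "c \<le> a" for c
    using y_F_phiQ[OF SQ[OF that]] by (simp add: phiQ_def)
  show ?thesis
    unfolding count_deviation_def
  proof (rule almost_grid_hits[OF a \<gamma>])
    show "y_F q F (LL q (a - 1) + b * a + 1) = 0"
      using QS SQ[of 1] y[of 1] a unfolding Q_special_def by auto
  next
    fix c assume c: "1 < c" "c \<le> a"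
    then show "\<bar>y_F q F (LL q (a - 1) + b * a + c) - (real c - 1) / real a\<bar> \<le> 1 / (2 * real a ^ 2)"
      using QS SQ[of c] y[of c] unfolding Q_special_def by (fastforce simp: abs_le_iff)
  qed
qed

lemma abs_count_deviation_y_F_LL:
  assumes QS: "Q_special q F" and \<gamma>: "0 < \<gamma>" "\<gamma> \<le> 1"
  shows "\<bar>count_deviation (y_F q F) \<gamma> (LL q a)\<bar> \<le> 2 * (\<Sum>j=1..a. real (ll q j))"
proof (induction a)
  case (Suc a)
  have "\<bar>count_deviation (y_F q F) \<gamma> (LL q a + ll q (Suc a) * Suc a) -
      count_deviation (y_F q F) \<gamma> (LL q a)\<bar> \<le> real (ll q (Suc a)) * 2"
    using abs_count_deviation_y_F_block[OF QS \<gamma>, of "Suc a"]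
    by (intro abs_count_deviation_blocks) simp
  with Suc.IH show ?case
    by (simp add: LL_Suc_ll mult.commute abs_le_iff del: LL.simps)
qed (simp add: count_deviation_def)

lemma abs_count_deviation_y_F:
  assumes QS: "Q_special q F" and \<gamma>: "0 < \<gamma>" "\<gamma> \<le> 1"
    and a: "1 \<le> a" and n: "LL q (a - 1) < n" "n \<le> LL q a"
  shows "\<bar>count_deviation (y_F q F) \<gamma> n\<bar> \<le> 2 * (\<Sum>j=1..a. real (ll q j)) + real a"
proof -
  define s where "s = LL q (a - 1)"
  define b where "b = (n - s) div a"
  define m where "m = (n - s) mod a"
  have n_eq: "n = s + b * a + m"
    using n unfolding s_def b_def m_def by simp
  have "b * a \<le> n - s"
    unfolding b_def by simp
  also have "\<dots> \<le> a * ll q a"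
    using n LL_Suc_ll[of q "a - 1"] a unfolding s_def by simp
  finally have b: "real b \<le> real (ll q a)"
    using a by (simp add: mult.commute)
  have m: "real m \<le> real a"
    using a unfolding m_def by simp
  have "count_deviation (y_F q F) \<gamma> n = count_deviation (y_F q F) \<gamma> s
      + (count_deviation (y_F q F) \<gamma> (s + b * a) - count_deviation (y_F q F) \<gamma> s)
      + count_deviation (\<lambda>c. y_F q F (s + b * a + c)) \<gamma> m"
    unfolding n_eq by (subst count_deviation_add) simp
  moreover have "\<bar>count_deviation (y_F q F) \<gamma> s\<bar> \<le> 2 * (\<Sum>j=1..a-1. real (ll q j))"
    unfolding s_def by (rule abs_count_deviation_y_F_LL[OF QS \<gamma>])
  moreover have "\<bar>count_deviation (y_F q F) \<gamma> (s + b * a) - count_deviation (y_F q F) \<gamma> s\<bar> \<le> real b * 2"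
    using abs_count_deviation_y_F_block[OF QS \<gamma> a] b unfolding s_def
    by (intro abs_count_deviation_blocks) simp
  moreover have "\<bar>count_deviation (\<lambda>c. y_F q F (s + b * a + c)) \<gamma> m\<bar> \<le> real m"
    using \<gamma> by (intro abs_count_deviation_le) simp_all
  moreover have "(\<Sum>j=1..a. real (ll q j)) = (\<Sum>j=1..a-1. real (ll q j)) + real (ll q a)"
    using a by (cases a) simp_all
  ultimately show ?thesis
    using b m by (simp add: abs_le_iff)
qed

lemma LL_level_exists:
  assumes "1 \<le> n"
  obtains a where "1 \<le> a" "LL q (a - 1) < n" "n \<le> LL q a"
proof -
  have "n * 2 \<le> n * (n + 1)"
    using assms by (intro mult_le_mono2) simp
  then have "n \<le> LL q n"
    using LL_lower_bound[of n q] by linarith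
  define a where "a = (LEAST a. n \<le> LL q a)"
  have "n \<le> LL q a"
    unfolding a_def by (rule LeastI) fact
  moreover have "1 \<le> a"
    using calculation assms by (cases a) auto
  moreover have "\<not> n \<le> LL q (a - 1)"
    using Least_le[of "\<lambda>a. n \<le> LL q a" "a - 1"] \<open>1 \<le> a\<close> by (auto simp: a_def[symmetric])
  ultimately show thesis
    using that by simp
qed

lemma level_lt_sqrt:
  assumes a: "1 \<le> a" and n: "LL q (a - 1) < n"
  shows "real a < sqrt (2 * real n) + 1"
proof -
  have "(a - 1) * (a - 1) \<le> (a - 1) * (a - 1 + 1)"
    by simp
  also have "\<dots> \<le> 2 * LL q (a - 1)"
    by (rule LL_lower_bound)
  finally have "real (a - 1) ^ 2 < 2 * real n"
    using n unfolding power2_eq_square of_nat_mult[symmetric] by linarith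
  then have "real (a - 1) < sqrt (2 * real n)"
    by (rule real_less_rsqrt)
  then show ?thesis
    using a by simp
qed

lemma sum_le_head_plus_tail_bound:
  fixes f :: "nat \<Rightarrow> real"
  assumes "\<And>j. 0 \<le> f j" "\<And>j. t < j \<Longrightarrow> f j \<le> M" "0 \<le> M"
  shows "(\<Sum>j=1..a. f j) \<le> (\<Sum>j=1..t. f j) + real a * M"
proof -
  have "(\<Sum>j=1..a. f j) = (\<Sum>j\<in>{1..a} \<inter> {..t}. f j) + (\<Sum>j\<in>{1..a} - {..t}. f j)"
    by (rule sum.Int_Diff) simp
  moreover have "(\<Sum>j\<in>{1..a} \<inter> {..t}. f j) \<le> (\<Sum>j=1..t. f j)"
    using assms(1) by (intro sum_mono2) auto
  moreover have "(\<Sum>j\<in>{1..a} - {..t}. f j) \<le> real (card ({1..a} - {..t})) * M"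
    using assms(2) by (intro sum_bounded_above) auto
  moreover have "real (card ({1..a} - {..t})) * M \<le> real a * M"
    using card_mono[of "{1..a}" "{1..a} - {..t}"] assms(3) by (intro mult_right_mono) auto
  ultimately show ?thesis
    by linarith
qed

lemma star_discrepancy_y_F_le:
  assumes QS: "Q_special q F" and M: "\<forall>j>t. real (ll q j) \<le> M" and n: "1 \<le> n"
  shows "star_discrepancy n (y_F q F) \<le>
    (2 * (\<Sum>j=1..t. real (ll q j)) + 2 * M + 1) / real n + sqrt 2 * (2 * M + 1) * real n powr (-1/2)"
proof -
  define S where "S = (\<Sum>j=1..t. real (ll q j))"
  obtain a where a: "1 \<le> a" "LL q (a - 1) < n" "n \<le> LL q a"
    using LL_level_exists[OF n] .
  have "0 \<le> M"
    using tail_bound_ll_ge_1[OF M] by simp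
  have "\<bar>count_deviation (y_F q F) \<gamma> n\<bar> \<le> 2 * S + (2 * M + 1) * (sqrt (2 * real n) + 1)"
    if "0 < \<gamma>" "\<gamma> \<le> 1" for \<gamma>
  proof -
    have "(\<Sum>j=1..a. real (ll q j)) \<le> S + real a * M"
      unfolding S_def using M \<open>0 \<le> M\<close> by (intro sum_le_head_plus_tail_bound) auto
    moreover have "(2 * M + 1) * real a \<le> (2 * M + 1) * (sqrt (2 * real n) + 1)"
      using level_lt_sqrt[OF a(1,2)] \<open>0 \<le> M\<close> by (intro mult_left_mono) auto
    ultimately show ?thesis
      using abs_count_deviation_y_F[OF QS that a] by (simp add: algebra_simps)
  qed
  then have "star_discrepancy n (y_F q F) \<le> (2 * S + (2 * M + 1) * (sqrt (2 * real n) + 1)) / real n"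
    by (rule star_discrepancy_le[OF n])
  also have "\<dots> = (2 * S + 2 * M + 1) / real n + sqrt 2 * (2 * M + 1) * (sqrt (real n) / real n)"
    by (simp add: real_sqrt_mult add_divide_distrib algebra_simps)
  also have "sqrt (real n) / real n = real n powr (-1/2)"
    using powr_minus[of "real n" "1/2"] powr_half_sqrt[of "real n"] by (simp add: sqrt_divide_self_eq)
  finally show ?thesis
    unfolding S_def .
qed

theorem mainTheorem11:
  fixes q :: "nat \<Rightarrow> int" and M :: real and t :: nat
  assumes "basic_seq q" and "infinite_in_limit q"
    and "\<forall>j>t. real (ll q j) \<le> M"
  shows "\<forall>F. Q_special q F \<longrightarrow> (\<forall>\<psi>::real. \<psi> > 1 \<longrightarrow>
           (\<forall>\<^sub>F n in sequentially.
              star_discrepancy n (y_F q F) < \<psi> * sqrt (2 * M) * (2 * M + 1) * real n powr (-1/2)))"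
proof (intro allI impI)
  fix F and \<psi> :: real
  assume QS: "Q_special q F" and \<psi>: "\<psi> > 1"
  define C where "C = 2 * (\<Sum>j=1..t. real (ll q j)) + 2 * M + 1"
  define K where "K = sqrt 2 * (2 * M + 1)"
  have "1 \<le> M"
    using tail_bound_ll_ge_1[OF assms(3)] .
  then have "0 < (\<psi> - 1) * K"
    using \<psi> by (simp add: K_def)
  then have "\<forall>\<^sub>F n in sequentially. C / real n < (\<psi> - 1) * K * real n powr (-1/2)"
    by real_asymp
  moreover have "\<forall>\<^sub>F n in sequentially. 1 \<le> n"
    by (rule eventually_ge_at_top)
  ultimately show "\<forall>\<^sub>F n in sequentially.
      star_discrepancy n (y_F q F) < \<psi> * sqrt (2 * M) * (2 * M + 1) * real n powr (-1/2)"
  proof eventually_elim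
    case (elim n)
    have "star_discrepancy n (y_F q F) \<le> C / real n + K * real n powr (-1/2)"
      using star_discrepancy_y_F_le[OF QS assms(3) elim(2)] by (simp add: C_def K_def)
    also have "\<dots> < \<psi> * K * real n powr (-1/2)"
      using elim(1) by (simp add: algebra_simps)
    also have "\<dots> \<le> \<psi> * sqrt (2 * M) * (2 * M + 1) * real n powr (-1/2)"
      using \<open>1 \<le> M\<close> \<psi> by (simp add: K_def mult_right_mono)
    finally show ?case .
  qed
qed

end
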